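(* For every $B\in B_{2n}(P_{2n})$ (i.e. every lower unitriangular symplectic $2n\times 2n$ matrix over $\mathbb{F}$), $$B=S_{2n,V_n(B)e_{n,1},1}\,S_{2n,V_n(B)e_{n,2},2}\cdots S_{2n,V_n(B)e_{n,n},n}.$$
   Context: $\mathbb{F}$ is the field with two elements, $e_{N,i}$ the $i$-th standard basis column vector of $\mathbb{F}^N$, $I_N$ the identity, $[N]=\{1,\dots,N\}$. $R_{2n}=\sum_{i=1}^{2n}e_{2n,i}e_{2n,2n+1-i}^{\top}$; $\mathrm{Sp}_{2n}=\{C\in\mathbb{F}^{2n\times2n}:C^{\top}R_{2n}C=R_{2n}\}$. $P_{2n}=\{(i,j):i,j\in[2n],i>j\}$ and $B_{2n}(P_{2n})=\big(I_{2n}+\mathrm{span}\{e_{2n,i}e_{2n,j}^{\top}:(i,j)\in P_{2n}\}\big)\cap\mathrm{Sp}_{2n}$. For $i\in[2n]$ and $v=\sum_j v_je_{2n,j}\in\mathbb{F}^{2n}$ with $v_i=0$, $S_{2n,v,i}=I_{2n}+v e_{2n,i}^{\top}+R_{2n}e_{2n,i}v^{\top}R_{2n}+v_{2n+1-i}e_{2n,2n+1-i}e_{2n,i}^{\top}$. $V_n:\mathbb{F}^{2n\times2n}\to\mathbb{F}^{2n\times n}$ is the linear map $V_n(B)=\sum_{j=1}^n\sum_{i=j+1}^{2n+1-j}e_{2n,i}e_{2n,i}^{\top}Be_{2n,j}e_{n,j}^{\top}$ (so $V_n(B)e_{n,j}$ is the part of column $j$ of $B$ in rows $j+1,\dots,2n+1-j$,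 and has zero $j$-th entry). *)

theory Defs
  imports "HOL-Library.Z2" "Jordan_Normal_Form.Matrix"
begin

text \<open>Matrices over the field with two elements (type bit). Indices of the
paper are 1-based; Jordan_Normal_Form matrices are 0-based, so paper entry
(i,j) is A $$ (i-1, j-1).\<close>

definition stdvec :: "nat \<Rightarrow> nat \<Rightarrow> bit mat" where
  "stdvec N i = mat N 1 (\<lambda>(r, c). if r + 1 = i then 1 else 0)"

text \<open>R_N = sum_{i=1}^N e_{N,i} e_{N,N+1-i}^T, i.e. the anti-identity.\<close>
definition Rmat :: "nat \<Rightarrow> bit mat" where
  "Rmat N = mat N N (\<lambda>(r, c). if (r + 1) + (c + 1) = N + 1 then 1 else 0)"

definition Sp :: "nat \<Rightarrow> bit mat set" where
  "Sp N = {C \<in> carrier_mat N N. transpose_mat C * Rmat N * C = Rmat N}"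

text \<open>B_N(P_N): identity plus span of e_i e_j^T with i > j, intersected with Sp_N
(N = 2n).\<close>
definition BP :: "nat \<Rightarrow> bit mat set" where
  "BP N = {C \<in> carrier_mat N N.
      (\<forall>i<N. \<forall>j<N. (i = j \<longrightarrow> C $$ (i, j) = 1) \<and> (i < j \<longrightarrow> C $$ (i, j) = 0))} \<inter> Sp N"

definition Smat :: "nat \<Rightarrow> bit mat \<Rightarrow> nat \<Rightarrow> bit mat" where
  "Smat N v i = one_mat N + v * transpose_mat (stdvec N i)
     + Rmat N * stdvec N i * transpose_mat v * Rmat N
     + (v $$ (N - i, 0)) \<cdot>\<^sub>m (stdvec N (N + 1 - i) * transpose_mat (stdvec N i))"

text \<open>V_n(B) = sum_{j=1}^n sum_{i=j+1}^{2n+1-j} e_i e_i^T B e_j e_{n,j}^T :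
entry (i,j) (1-based) is B_{ij} if j+1 <= i <= 2n+1-j, else 0.\<close>
definition Vmap :: "nat \<Rightarrow> bit mat \<Rightarrow> bit mat" where
  "Vmap n B = mat (2 * n) n (\<lambda>(r, c).
      if c + 2 \<le> r + 1 \<and> r + 1 \<le> 2 * n + 1 - (c + 1) then B $$ (r, c) else 0)"

fun ordprod :: "nat \<Rightarrow> (nat \<Rightarrow> bit mat) \<Rightarrow> nat \<Rightarrow> bit mat" where
  "ordprod N F 0 = one_mat N"
| "ordprod N F (Suc k) = ordprod N F k * F (Suc k)"

end

theory Submission
  imports Defs
begin

text \<open>Every S_{2n,v,i} with v supported in rows i+1, ..., 2n+1-i is lower unitriangular and
symplectic, so P = S_1 \<cdots> S_n lies in B_{2n}(P_{2n}). Right multiplication by S_{v,i} adds P v to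
column i and adds column 2n+1-i of P to the columns c with v_{2n+1-c} = 1. By induction,
S_1 \<cdots> S_{i-1} is still the identity on rows up to 2n+1-i and columns from i on, so the i-th
factor writes exactly v_i into the window of column i and leaves the other windows alone; hence
V_n(P) = V_n(B). Finally V_n is injective on B_{2n}(P_{2n}): for (r, c) below the antidiagonal, the
(2n+1-r, c) entry of B^T R B = R expresses B_{rc} through entries in earlier rows and entries in the
windows of V_n.\<close>

declare add_bit_eq_xor [simp del] mult_bit_eq_and [simp del]

lemma bit_add_self [simp]: "(x::bit) + x = 0"
  by (simp add: add_bit_eq_xor)

lemma bit_add_eq_0_iff: "(x::bit) + y = 0 \<longleftrightarrow> x = y"
  by (cases x; cases y) simp_all

lemma sum_eq_single:
  assumes "finite A" "a \<in> A" "\<And>x. x \<in> A \<Longrightarrow> x \<noteq> a \<Longrightarrow> f x = 0"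
  shows "sum f A = f a"
  using assms by (simp add: sum.remove)

lemma index_mult_mat_sum:
  assumes "A \<in> carrier_mat a b" "B \<in> carrier_mat b c" "i < a" "j < c"
  shows "(A * B) $$ (i, j) = (\<Sum>k<b. A $$ (i, k) * B $$ (k, j))"
  using assms by (simp add: scalar_prod_def lessThan_atLeast0)

declare index_mult_mat(1) [simp del]

lemma stdvec_carrier [simp]: "stdvec N i \<in> carrier_mat N 1"
  and dim_stdvec [simp]: "dim_row (stdvec N i) = N" "dim_col (stdvec N i) = 1"
  and index_stdvec [simp]: "r < N \<Longrightarrow> stdvec N i $$ (r, 0) = (if r + 1 = i then 1 else 0)"
  by (simp_all add: stdvec_def)

lemma Rmat_carrier [simp]: "Rmat N \<in> carrier_mat N N"
  and dim_Rmat [simp]: "dim_row (Rmat N) = N" "dim_col (Rmat N) = N"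
  and index_Rmat [simp]: "r < N \<Longrightarrow> c < N \<Longrightarrow> Rmat N $$ (r, c) = (if r + c + 1 = N then 1 else 0)"
  by (simp_all add: Rmat_def)

lemma index_Rmat_mult:
  assumes "X \<in> carrier_mat N k" "r < N" "c < k"
  shows "(Rmat N * X) $$ (r, c) = X $$ (N - 1 - r, c)"
proof -
  have "(Rmat N * X) $$ (r, c) = (\<Sum>l<N. Rmat N $$ (r, l) * X $$ (l, c))"
    using assms by (intro index_mult_mat_sum) auto
  also have "\<dots> = Rmat N $$ (r, N - 1 - r) * X $$ (N - 1 - r, c)"
    using assms by (intro sum_eq_single) auto
  finally show ?thesis using assms by simp
qed

lemma index_mult_Rmat:
  assumes "X \<in> carrier_mat k N" "r < k" "c < N"
  shows "(X * Rmat N) $$ (r, c) = X $$ (r, N - 1 - c)"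
proof -
  have "(X * Rmat N) $$ (r, c) = (\<Sum>l<N. X $$ (r, l) * Rmat N $$ (l, c))"
    using assms by (intro index_mult_mat_sum) auto
  also have "\<dots> = X $$ (r, N - 1 - c) * Rmat N $$ (N - 1 - c, c)"
    using assms by (intro sum_eq_single) auto
  finally show ?thesis using assms by simp
qed

lemma index_mult_transpose_col:
  assumes "x \<in> carrier_mat N 1" "y \<in> carrier_mat M 1" "r < N" "c < M"
  shows "(x * transpose_mat y) $$ (r, c) = x $$ (r, 0) * y $$ (c, 0)"
  using index_mult_mat_sum[of x N 1 "transpose_mat y" M r c] assms by simp

lemma index_Sp_form:
  assumes "C \<in> carrier_mat N N" "a < N" "b < N"
  shows "(transpose_mat C * Rmat N * C) $$ (a, b) = (\<Sum>k<N. C $$ (N - 1 - k, a) * C $$ (k, b))"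
proof -
  have "(transpose_mat C * Rmat N * C) $$ (a, b) = (\<Sum>k<N. (transpose_mat C * Rmat N) $$ (a, k) * C $$ (k, b))"
    using assms by (intro index_mult_mat_sum) auto
  also have "\<dots> = (\<Sum>k<N. C $$ (N - 1 - k, a) * C $$ (k, b))"
    using assms by (intro sum.cong) (simp_all add: index_mult_Rmat[of _ N])
  finally show ?thesis .
qed

lemma Sp_iff_index:
  assumes "C \<in> carrier_mat N N"
  shows "C \<in> Sp N \<longleftrightarrow>
    (\<forall>a<N. \<forall>b<N. (\<Sum>k<N. C $$ (N - 1 - k, a) * C $$ (k, b)) = (if a + b + 1 = N then 1 else 0))"
proof -
  have "C \<in> Sp N \<longleftrightarrow>
      (\<forall>a<N. \<forall>b<N. (transpose_mat C * Rmat N * C) $$ (a, b) = Rmat N $$ (a, b))"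
    using assms unfolding Sp_def mat_eq_iff carrier_mat_def
    by (auto simp del: index_Rmat)
  then show ?thesis
    using assms by (simp add: index_Sp_form)
qed

lemma Sp_mult:
  assumes A: "A \<in> carrier_mat N N" "A \<in> Sp N" and B: "B \<in> carrier_mat N N" "B \<in> Sp N"
  shows "A * B \<in> Sp N"
proof -
  have "transpose_mat (A * B) * Rmat N * (A * B) = transpose_mat B * (transpose_mat A * Rmat N * A) * B"
    using A(1) B(1) by (simp add: transpose_mult[OF A(1) B(1)] assoc_mult_mat[of _ N N _ N _ N]
        mult_carrier_mat[of _ N N _ N])
  also have "\<dots> = Rmat N"
    using A B by (simp add: Sp_def)
  finally show ?thesis
    using A B unfolding Sp_def by auto
qed

definition lower_unitriangular :: "nat \<Rightarrow> 'a::{zero,one} mat \<Rightarrow> bool" where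
  "lower_unitriangular N C \<longleftrightarrow>
     (\<forall>i<N. \<forall>j<N. (i = j \<longrightarrow> C $$ (i, j) = 1) \<and> (i < j \<longrightarrow> C $$ (i, j) = 0))"

lemma index_lower_unitriangular:
  "lower_unitriangular N C \<Longrightarrow> i \<le> j \<Longrightarrow> j < N \<Longrightarrow> C $$ (i, j) = (if i = j then 1 else 0)"
  unfolding lower_unitriangular_def by (cases "i = j") auto

lemma BP_iff: "C \<in> BP N \<longleftrightarrow> C \<in> carrier_mat N N \<and> lower_unitriangular N C \<and> C \<in> Sp N"
  unfolding BP_def lower_unitriangular_def by auto

lemma lower_unitriangular_mult:
  fixes A B :: "'a::semiring_1 mat"
  assumes A: "A \<in> carrier_mat N N" "lower_unitriangular N A"
    and B: "B \<in> carrier_mat N N" "lower_unitriangular N B"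
  shows "lower_unitriangular N (A * B)"
  unfolding lower_unitriangular_def
proof (intro allI impI conjI)
  fix i j assume ij: "i < N" "j < N"
  have AB: "(A * B) $$ (i, j) = (\<Sum>k<N. A $$ (i, k) * B $$ (k, j))"
    using A B ij by (intro index_mult_mat_sum) auto
  show "(A * B) $$ (i, j) = 1" if "i = j"
  proof -
    have "(\<Sum>k<N. A $$ (i, k) * B $$ (k, j)) = A $$ (i, i) * B $$ (i, j)"
      using A(2) B(2) ij that unfolding lower_unitriangular_def
      by (intro sum_eq_single) (auto simp: neq_iff)
    then show ?thesis
      using AB A(2) B(2) ij that unfolding lower_unitriangular_def by simp
  qed
  show "(A * B) $$ (i, j) = 0" if "i < j"
  proof -
    have "A $$ (i, k) * B $$ (k, j) = 0" if "k < N" for k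
      using A(2) B(2) ij \<open>i < j\<close> that unfolding lower_unitriangular_def
      by (cases "k \<le> i") auto
    then show ?thesis
      using AB by simp
  qed
qed

lemma BP_mult: "A \<in> BP N \<Longrightarrow> B \<in> BP N \<Longrightarrow> A * B \<in> BP N"
  unfolding BP_iff using lower_unitriangular_mult Sp_mult by (meson mult_carrier_mat)

lemma one_mat_BP: "1\<^sub>m N \<in> BP N"
  unfolding BP_iff lower_unitriangular_def Sp_def by simp

lemma BP_index_recurrence:
  assumes X: "X \<in> BP N" and rc: "c < r" "r < N" "N \<le> r + c"
  shows "X $$ (r, c) = (\<Sum>k\<in>{c..<r}. X $$ (N - 1 - k, N - 1 - r) * X $$ (k, c))"
proof -
  let ?j = "N - 1 - r"
  let ?f = "\<lambda>k. X $$ (N - 1 - k, ?j) * X $$ (k, c)"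
  have C: "X \<in> carrier_mat N N" and L: "lower_unitriangular N X" and S: "X \<in> Sp N"
    using X unfolding BP_iff by auto
  \<comment> \<open>entry (N-1-r, c) of the identity X^T R X = R\<close>
  have "sum ?f {..<N} = 0"
    using S rc unfolding Sp_iff_index[OF C] by simp
  moreover have "sum ?f {..<N} = sum ?f {c..<Suc r}"
  proof (rule sum.mono_neutral_right)
    show "\<forall>k\<in>{..<N} - {c..<Suc r}. ?f k = 0"
      using L rc unfolding lower_unitriangular_def by (auto simp: not_less_eq)
  qed (use rc in auto)
  moreover have "?f r = X $$ (r, c)"
  proof -
    have "?j < N" using rc by simp
    then show ?thesis
      using L unfolding lower_unitriangular_def by simp
  qed
  ultimately show ?thesis
    using rc by (simp add: bit_add_eq_0_iff)
qed

lemma BP_eqI: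
  assumes X: "X \<in> BP N" and Y: "Y \<in> BP N"
    and agree: "\<And>r c. c < r \<Longrightarrow> r + c < N \<Longrightarrow> X $$ (r, c) = Y $$ (r, c)"
  shows "X = Y"
proof -
  have rows: "X $$ (r, c) = Y $$ (r, c)" if "r < N" "c < N" for r c
    using that
  proof (induction r arbitrary: c rule: less_induct)
    case (less r)
    consider "r \<le> c" | "c < r" "r + c < N" | "c < r" "N \<le> r + c" by linarith
    then show ?case
    proof cases
      case 1
      then show ?thesis
        using X Y less.prems index_lower_unitriangular unfolding BP_iff by metis
    next
      case 2
      then show ?thesis by (rule agree)
    next
      case 3
      have "X $$ (N - 1 - k, N - 1 - r) * X $$ (k, c) = Y $$ (N - 1 - k, N - 1 - r) * Y $$ (k, c)"
        if "k \<in> {c..<r}" for k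
      proof -
        have "N - 1 - r < N - 1 - k" "N - 1 - k + (N - 1 - r) < N"
          using that 3 less.prems by auto
        moreover have "X $$ (k, c) = Y $$ (k, c)"
          using that less.prems by (intro less.IH) auto
        ultimately show ?thesis
          using agree by simp
      qed
      then show ?thesis
        using BP_index_recurrence[OF X 3(1) less.prems(1) 3(2)]
          BP_index_recurrence[OF Y 3(1) less.prems(1) 3(2)] sum.cong by simp
    qed
  qed
  show ?thesis
    using X Y unfolding BP_iff by (intro eq_matI) (auto simp: rows)
qed

text \<open>Support in the 0-based rows m+1, ..., N-1-m: the rows in which V_n keeps column m+1.\<close>

definition supported_col :: "nat \<Rightarrow> nat \<Rightarrow> bit mat \<Rightarrow> bool" where
  "supported_col N m v \<longleftrightarrow>
     v \<in> carrier_mat N 1 \<and> (\<forall>r<N. v $$ (r, 0) \<noteq> 0 \<longrightarrow> m < r \<and> r + m < N)"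

lemma supported_col_zero:
  "supported_col N m v \<Longrightarrow> r < N \<Longrightarrow> \<not> (m < r \<and> r + m < N) \<Longrightarrow> v $$ (r, 0) = 0"
  unfolding supported_col_def by auto

lemma Smat_carrier: "v \<in> carrier_mat N 1 \<Longrightarrow> Smat N v i \<in> carrier_mat N N"
  unfolding Smat_def carrier_mat_def by simp

lemma index_Smat:
  assumes v: "v \<in> carrier_mat N 1" and m: "m < N" and rc: "r < N" "c < N"
  shows "Smat N v (Suc m) $$ (r, c) = (if r = c then 1 else 0) + (if c = m then v $$ (r, 0) else 0)
    + (if r = N - 1 - m then v $$ (N - 1 - c, 0) + (if c = m then v $$ (N - 1 - m, 0) else 0) else 0)"
proof -
  let ?e = "stdvec N (Suc m)"
  have Re: "Rmat N * ?e \<in> carrier_mat N 1"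
    using Rmat_carrier stdvec_carrier by (rule mult_carrier_mat)
  have Re_index: "(Rmat N * ?e) $$ (x, 0) = (if x = N - 1 - m then 1 else 0)" if "x < N" for x
    using index_Rmat_mult[OF stdvec_carrier that, of 0] that m by auto
  have ReV: "Rmat N * ?e * transpose_mat v \<in> carrier_mat N N"
    using Re v by auto
  have T2: "(Rmat N * ?e * transpose_mat v * Rmat N) $$ (r, c)
      = (if r = N - 1 - m then v $$ (N - 1 - c, 0) else 0)"
    using index_mult_Rmat[OF ReV rc]
      index_mult_transpose_col[OF Re v rc(1), of "N - 1 - c"] Re_index rc v by auto
  have T1: "(v * transpose_mat ?e) $$ (r, c) = (if c = m then v $$ (r, 0) else 0)"
    using index_mult_transpose_col[OF v stdvec_carrier rc] rc by simp
  have T3: "(stdvec N (N + 1 - Suc m) * transpose_mat ?e) $$ (r, c)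
      = (if r = N - 1 - m \<and> c = m then 1 else 0)"
    using index_mult_transpose_col[OF stdvec_carrier stdvec_carrier rc] rc m by auto
  show ?thesis
    unfolding Smat_def using rc v T1 T2 T3 by (simp add: distrib_left)
qed

lemma index_mult_Smat:
  assumes A: "A \<in> carrier_mat k N" and v: "v \<in> carrier_mat N 1" and m: "m < N"
    and rc: "r < k" "c < N"
  shows "(A * Smat N v (Suc m)) $$ (r, c) = A $$ (r, c)
    + (if c = m then (\<Sum>x<N. A $$ (r, x) * v $$ (x, 0)) else 0)
    + A $$ (r, N - 1 - m) * (v $$ (N - 1 - c, 0) + (if c = m then v $$ (N - 1 - m, 0) else 0))"
proof -
  let ?t = "v $$ (N - 1 - c, 0) + (if c = m then v $$ (N - 1 - m, 0) else 0)"
  have "(A * Smat N v (Suc m)) $$ (r, c) = (\<Sum>x<N. A $$ (r, x) * Smat N v (Suc m) $$ (x, c))"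
    using A Smat_carrier[OF v] rc by (rule index_mult_mat_sum)
  also have "\<dots> = (\<Sum>x<N. (if x = c then A $$ (r, c) else 0)
      + (if c = m then A $$ (r, x) * v $$ (x, 0) else 0)
      + (if x = N - 1 - m then A $$ (r, N - 1 - m) * ?t else 0))"
    using v m rc by (intro sum.cong) (auto simp: index_Smat distrib_left)
  also have "\<dots> = A $$ (r, c) + (if c = m then (\<Sum>x<N. A $$ (r, x) * v $$ (x, 0)) else 0)
      + A $$ (r, N - 1 - m) * ?t"
    using m rc by (simp add: sum.distrib)
  finally show ?thesis .
qed

lemma Smat_lower_unitriangular:
  assumes v: "supported_col N m v" and m: "m < N"
  shows "lower_unitriangular N (Smat N v (Suc m))"
  unfolding lower_unitriangular_def
proof (intro allI impI conjI)
  fix r c assume rc: "r < N" "c < N"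
  have vc: "v \<in> carrier_mat N 1"
    using v by (simp add: supported_col_def)
  note S = index_Smat[OF vc m rc]
  show "Smat N v (Suc m) $$ (r, c) = 1" if "r = c"
    unfolding S using that rc v by (auto simp: supported_col_zero)
  show "Smat N v (Suc m) $$ (r, c) = 0" if "r < c"
    unfolding S using that rc v by (auto simp: supported_col_zero)
qed

lemma sum_mirror_products_eq_0:
  fixes g :: "nat \<Rightarrow> bit"
  assumes "even N"
  shows "(\<Sum>k<N. g (N - 1 - k) * g k) = 0"
proof -
  obtain n where N: "N = n + n"
    using assms by (metis evenE mult_2)
  let ?f = "\<lambda>k. g (N - 1 - k) * g k"
  have "(\<Sum>k\<in>{n..<N}. ?f k) = (\<Sum>k<n. ?f (N - 1 - k))"
    by (rule sum.reindex_bij_witness[where i = "\<lambda>k. N - 1 - k" and j = "\<lambda>k. N - 1 - k"])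
      (auto simp: N)
  also have "\<dots> = (\<Sum>k<n. ?f k)"
    by (intro sum.cong) (auto simp: N mult.commute)
  finally show ?thesis
    using sum.atLeastLessThan_concat[of 0 n N ?f] by (simp add: N atLeast0LessThan)
qed

lemma sum_Smat_mirror_col:
  assumes v: "supported_col N m v" and N: "even N" and m: "m < N" and a: "a < N"
  shows "(\<Sum>x<N. Smat N v (Suc m) $$ (N - 1 - x, a) * v $$ (x, 0)) = v $$ (N - 1 - a, 0)"
proof -
  let ?v = "\<lambda>x. v $$ (x, 0)"
  have vc: "v \<in> carrier_mat N 1"
    using v by (simp add: supported_col_def)
  have vm: "?v m = 0"
    using v m by (simp add: supported_col_zero)
  have "Smat N v (Suc m) $$ (N - 1 - x, a) * ?v x = (if x = N - 1 - a then ?v (N - 1 - a) else 0)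
      + (if a = m then ?v (N - 1 - x) * ?v x else 0)" if x: "x < N" for x
  proof (cases "x = m")
    case True
    then show ?thesis
      using a m vc vm by (auto simp: index_Smat)
  next
    case False
    then have "N - 1 - x \<noteq> N - 1 - m"
      using x m by auto
    then show ?thesis
      using a x m vc by (auto simp: index_Smat distrib_right)
  qed
  then have "(\<Sum>x<N. Smat N v (Suc m) $$ (N - 1 - x, a) * ?v x)
      = (\<Sum>x<N. (if x = N - 1 - a then ?v (N - 1 - a) else 0)
        + (if a = m then ?v (N - 1 - x) * ?v x else 0))"
    by simp
  also have "\<dots> = ?v (N - 1 - a)"
    using a sum_mirror_products_eq_0[OF N, of ?v] by (cases "a = m") (simp_all add: sum.distrib)
  finally show ?thesis .
qed

lemma Smat_Sp:
  assumes v: "supported_col N m v" and N: "even N" and m: "m < N"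
  shows "Smat N v (Suc m) \<in> Sp N"
proof -
  let ?S = "Smat N v (Suc m)"
  let ?A = "transpose_mat ?S * Rmat N"
  let ?v = "\<lambda>x. v $$ (x, 0)"
  have vc: "v \<in> carrier_mat N 1"
    using v by (simp add: supported_col_def)
  have SC: "?S \<in> carrier_mat N N"
    using vc by (rule Smat_carrier)
  then have AC: "?A \<in> carrier_mat N N"
    by (intro mult_carrier_mat[of _ N N]) auto
  have A_index: "?A $$ (a, x) = ?S $$ (N - 1 - x, a)" if "a < N" "x < N" for a x
    using index_mult_Rmat[of "transpose_mat ?S" N N a x] SC that by simp
  have "(?A * ?S) $$ (a, b) = Rmat N $$ (a, b)" if ab: "a < N" "b < N" for a b
  proof -
    have mm: "N - 1 - m \<noteq> m"
      using N m by presburger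
    have "(\<Sum>x<N. ?A $$ (a, x) * ?v x) = ?v (N - 1 - a)"
      using sum_Smat_mirror_col[OF v N m ab(1)] ab by (simp add: A_index)
    moreover have "?A $$ (a, N - 1 - m) = (if a = m then 1 else 0)"
      using ab m mm v by (simp add: A_index index_Smat[OF vc m] supported_col_zero)
    moreover have "N - 1 - b = a \<longleftrightarrow> a + b + 1 = N" "N - 1 - b = N - 1 - m \<longleftrightarrow> b = m"
      using ab m by auto
    then have "?A $$ (a, b) = (if a + b + 1 = N then 1 else 0)
        + (if a = m then ?v (N - 1 - b) else 0)
        + (if b = m then ?v (N - 1 - a) + (if a = m then ?v (N - 1 - m) else 0) else 0)"
      using ab m by (simp add: A_index index_Smat[OF vc m])
    moreover have "a = m \<Longrightarrow> b = m \<Longrightarrow> a + b + 1 \<noteq> N"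
      using mm by auto
    ultimately show ?thesis
      using ab unfolding index_mult_Smat[OF AC vc m ab]
      by (cases "a = m"; cases "b = m") (simp_all add: ac_simps)
  qed
  then have "?A * ?S = Rmat N"
    using AC SC by (intro eq_matI) auto
  then show ?thesis
    using SC by (simp add: Sp_def)
qed

lemma Smat_BP:
  "supported_col N m v \<Longrightarrow> even N \<Longrightarrow> m < N \<Longrightarrow> Smat N v (Suc m) \<in> BP N"
  unfolding BP_iff using Smat_carrier Smat_lower_unitriangular Smat_Sp
  by (auto simp: supported_col_def)

definition Sprod :: "nat \<Rightarrow> (nat \<Rightarrow> bit mat) \<Rightarrow> nat \<Rightarrow> bit mat" where
  "Sprod N w = ordprod N (\<lambda>j. Smat N (w j) j)"

lemma Sprod_0 [simp]: "Sprod N w 0 = 1\<^sub>m N"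
  and Sprod_Suc: "Sprod N w (Suc m) = Sprod N w m * Smat N (w (Suc m)) (Suc m)"
  by (simp_all add: Sprod_def)

context
  fixes N k :: nat and w :: "nat \<Rightarrow> bit mat"
  assumes N: "even N" and k: "2 * k \<le> N"
    and supp: "\<And>j. j < k \<Longrightarrow> supported_col N j (w (Suc j))"
begin

lemma Sprod_BP: "m \<le> k \<Longrightarrow> Sprod N w m \<in> BP N"
proof (induction m)
  case (Suc m)
  then have "Smat N (w (Suc m)) (Suc m) \<in> BP N"
    using N k supp by (intro Smat_BP) auto
  then show ?case
    using Suc by (simp add: Sprod_Suc BP_mult)
qed (simp add: one_mat_BP)

lemma index_Sprod_Suc:
  assumes m: "m < k" and rc: "r < N" "c < N"
  shows "Sprod N w (Suc m) $$ (r, c) = Sprod N w m $$ (r, c)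
    + (if c = m then (\<Sum>x<N. Sprod N w m $$ (r, x) * w (Suc m) $$ (x, 0)) else 0)
    + Sprod N w m $$ (r, N - 1 - m)
      * (w (Suc m) $$ (N - 1 - c, 0) + (if c = m then w (Suc m) $$ (N - 1 - m, 0) else 0))"
proof -
  have "Sprod N w m \<in> carrier_mat N N"
    using Sprod_BP m by (simp add: BP_iff)
  moreover have "w (Suc m) \<in> carrier_mat N 1"
    using supp m by (simp add: supported_col_def)
  ultimately show ?thesis
    unfolding Sprod_Suc using m k rc by (intro index_mult_Smat) auto
qed

lemma index_Sprod_identity_block:
  "m \<le> k \<Longrightarrow> r + m < N \<Longrightarrow> m \<le> l \<Longrightarrow> l < N \<Longrightarrow> Sprod N w m $$ (r, l) = (if r = l then 1 else 0)"
proof (induction m arbitrary: r l)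
  case (Suc m)
  have "Sprod N w m $$ (r, l) = (if r = l then 1 else 0)"
    using Suc by simp
  moreover have "Sprod N w m $$ (r, N - 1 - m) = 0"
    using Suc.IH[of r "N - 1 - m"] Suc.prems k by auto
  ultimately show ?case
    using Suc.prems by (simp add: index_Sprod_Suc)
qed simp

lemma index_Sprod_below_diagonal:
  "m \<le> k \<Longrightarrow> c < r \<Longrightarrow> r + c < N \<Longrightarrow>
    Sprod N w m $$ (r, c) = (if c < m then w (Suc c) $$ (r, 0) else 0)"
proof (induction m)
  case (Suc m)
  let ?P = "Sprod N w m" and ?v = "\<lambda>x. w (Suc m) $$ (x, 0)"
  have m: "m < k" and rc: "r < N" "c < N"
    using Suc.prems by auto
  have v0: "?v x = 0" if "x < N" "\<not> (m < x \<and> x + m < N)" for x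
    using supp[OF m] that by (rule supported_col_zero)
  consider "c < m" | "c = m" | "m < c" by linarith
  then show ?case
  proof cases
    case 1
    have "?v (N - 1 - c) = 0"
      using 1 rc by (intro v0) auto
    then show ?thesis
      using Suc 1 rc by (simp add: index_Sprod_Suc)
  next
    case 2
    have P_block: "?P $$ (r, x) = (if r = x then 1 else 0)" if "m \<le> x" "x < N" for x
      using index_Sprod_identity_block[of m r x] that m Suc.prems 2 by simp
    have "?P $$ (r, x) * ?v x = 0" if "x < N" "x \<noteq> r" for x
      using that P_block[of x] v0[of x] by (cases "m < x \<and> x + m < N") auto
    then have "(\<Sum>x<N. ?P $$ (r, x) * ?v x) = ?P $$ (r, r) * ?v r"
      using rc by (intro sum_eq_single) auto
    then show ?thesis
      using Suc 2 rc P_block[of r] P_block[of "N - 1 - m"] k by (simp add: index_Sprod_Suc)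
  next
    case 3
    then show ?thesis
      using Suc rc index_Sprod_identity_block[of m r "N - 1 - m"] k by (simp add: index_Sprod_Suc)
  qed
qed simp

end

lemma index_Vmap_col:
  assumes "j < n" "r < 2 * n"
  shows "(Vmap n B * stdvec n (Suc j)) $$ (r, 0) = (if j < r \<and> r + j < 2 * n then B $$ (r, j) else 0)"
proof -
  have "(Vmap n B * stdvec n (Suc j)) $$ (r, 0) = (\<Sum>k<n. Vmap n B $$ (r, k) * stdvec n (Suc j) $$ (k, 0))"
    using assms by (intro index_mult_mat_sum) (auto simp: Vmap_def)
  also have "\<dots> = Vmap n B $$ (r, j)"
    using assms by (subst sum_eq_single[of _ j]) auto
  finally show ?thesis
    using assms by (auto simp: Vmap_def)
qed

lemma Vmap_col_supported:
  assumes "j < n"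
  shows "supported_col (2 * n) j (Vmap n B * stdvec n (Suc j))"
proof -
  have "Vmap n B \<in> carrier_mat (2 * n) n"
    by (simp add: Vmap_def)
  then show ?thesis
    unfolding supported_col_def using assms by (auto simp: index_Vmap_col)
qed

theorem theorem1:
  fixes n :: nat and B :: "bit mat"
  assumes "B \<in> BP (2 * n)"
  shows "B = ordprod (2 * n) (\<lambda>j. Smat (2 * n) (Vmap n B * stdvec n j) j) n"
proof -
  define w where "w j = Vmap n B * stdvec n j" for j
  have setting: "even (2 * n)" "2 * n \<le> 2 * n" "\<And>j. j < n \<Longrightarrow> supported_col (2 * n) j (w (Suc j))"
    by (simp_all add: w_def Vmap_col_supported)
  have "B = Sprod (2 * n) w n"
  proof (rule BP_eqI[OF assms Sprod_BP[OF setting order_refl]])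
    fix r c assume "c < r" "r + c < 2 * n"
    then have "Sprod (2 * n) w n $$ (r, c) = w (Suc c) $$ (r, 0)"
      using index_Sprod_below_diagonal[OF setting order_refl] by simp
    also have "\<dots> = B $$ (r, c)"
      using \<open>c < r\<close> \<open>r + c < 2 * n\<close> by (simp add: w_def index_Vmap_col)
    finally show "B $$ (r, c) = Sprod (2 * n) w n $$ (r, c)" ..
  qed
  then show ?thesis
    by (simp add: Sprod_def w_def)
qed

end
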